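(* $V(D_k)\le S\cdot LIN(D_k)\le S\cdot OPT(D_k)\le S\cdot LIN(D_k)+\frac{S\,(m(D_k)+k)}{2}$.
   Context: Let $S>0$, let $D$ be a finite multiset of items with sizes in $(0,S]$ and $k\ge1$ an integer. $D_k$ is the collection of $k$ copies of each item of $D$; $V(D_k)$ is its total size. A $k$-times bin packing assigns all copies to bins with total size at most $S$ per bin and no two copies of the same item in one bin; $OPT(D_k)$ is the minimum number of bins. Let $c[1],\dots,c[m]$ be the distinct item sizes of $D$, $m(D_k)=m(D)=m$, $n[i]$ the number of items of size $c[i]$, $\mathbf{n}=(n[1],\dots,n[m])$. A configuration is a vector $a\in\mathbb{Z}^m_{\ge0}$ with $a_i\le n[i]$ and $\sum_ia_ic[i]\le S$; $A$ is the $m\times t$ matrix whose columns are all configurations. $LIN(D_k)$ is the optimal value of the linear program: minimize $\mathbf{1}\cdot\mathbf{x}$ subject to $A\mathbf{x}=k\mathbf{n}$, $\mathbf{x}\in\mathbb{R}^t_{\ge0}$. *)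

theory Defs
  imports Main "HOL-Library.Multiset" Complex_Main
begin

text \<open>The finite multiset D of items is given as a list ds of item sizes;
 item i (for i < length ds) has size ds ! i, and D = mset ds.
 Copies of items in D_k are the pairs (i, j) with i < length ds, j < k.\<close>

definition total_size :: "real list \<Rightarrow> nat \<Rightarrow> real" where
  "total_size ds k = real k * sum_list ds"

text \<open>A k-times bin packing of ds into N bins (numbered 0..N-1) with capacity S:
 f i j is the bin of copy j of item i.\<close>
definition is_k_packing :: "real \<Rightarrow> real list \<Rightarrow> nat \<Rightarrow> nat \<Rightarrow> (nat \<Rightarrow> nat \<Rightarrow> nat) \<Rightarrow> bool" where
  "is_k_packing S ds k N f \<longleftrightarrow>
     (\<forall>i<length ds. \<forall>j<k. f i j < N) \<and>
     (\<forall>i<length ds. \<forall>j<k. \<forall>j'<k. j \<noteq> j' \<longrightarrow> f i j \<noteq> f i j') \<and>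
     (\<forall>b<N. (\<Sum>p\<in>{(i, j). i < length ds \<and> j < k \<and> f i j = b}. ds ! fst p) \<le> S)"

definition OPT :: "real \<Rightarrow> real list \<Rightarrow> nat \<Rightarrow> nat" where
  "OPT S ds k = (LEAST N. \<exists>f. is_k_packing S ds k N f)"

text \<open>Distinct item sizes c[0..m-1] (in increasing order) and multiplicities n[i].\<close>
definition sizes :: "real list \<Rightarrow> real list" where
  "sizes ds = sorted_list_of_set (set ds)"

definition m_of :: "real list \<Rightarrow> nat" where
  "m_of ds = length (sizes ds)"

definition mult :: "real list \<Rightarrow> nat \<Rightarrow> nat" where
  "mult ds i = count (mset ds) (sizes ds ! i)"

definition configs :: "real \<Rightarrow> real list \<Rightarrow> (nat \<Rightarrow> nat) set" where
  "configs S ds = {a. (\<forall>i<m_of ds. a i \<le> mult ds i) \<and> (\<forall>i\<ge>m_of ds. a i = 0) \<and>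
       (\<Sum>i<m_of ds. real (a i) * sizes ds ! i) \<le> S}"

definition lp_feasible :: "real \<Rightarrow> real list \<Rightarrow> nat \<Rightarrow> ((nat \<Rightarrow> nat) \<Rightarrow> real) \<Rightarrow> bool" where
  "lp_feasible S ds k x \<longleftrightarrow>
     (\<forall>a\<in>configs S ds. x a \<ge> 0) \<and>
     (\<forall>i<m_of ds. (\<Sum>a\<in>configs S ds. real (a i) * x a) = real k * real (mult ds i))"

definition LIN :: "real \<Rightarrow> real list \<Rightarrow> nat \<Rightarrow> real" where
  "LIN S ds k = Inf {(\<Sum>a\<in>configs S ds. x a) | x. lp_feasible S ds k x}"

end

theory Submission
  imports Defs "HOL-Library.Function_Algebras"
begin

(* The first two inequalities are the easy ones: every configuration has size at most S,
   which gives V(D_k) <= S * LIN, and the bin contents of an optimal packing form a feasible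
   solution of the LP, which gives LIN <= OPT.

   For the third, any LP solution can be moved to one of no larger value whose support has at
   most m configurations (a vertex argument). Rounding it down uses floor(x) bins; the
   residual items, of total size at most S * F where F is the total fractional part, are
   covered either by one bin per configuration of the support (at most m bins) or by k rounds
   of next fit (at most 2 F + k bins), and the better of the two costs at most F + (m + k) / 2.
   A list of configurations that covers k copies of every item is turned into a k-times
   packing by handing out the copies of each size class to consecutive slots. *)

section \<open>Size classes\<close>

lemma set_sizes [simp]: "set (sizes ds) = set ds"
  unfolding sizes_def by simp

lemma distinct_sizes [simp]: "distinct (sizes ds)"
  unfolding sizes_def by simp

lemma sizes_nth_in_set: "c < m_of ds \<Longrightarrow> sizes ds ! c \<in> set ds"
  unfolding m_of_def by (metis nth_mem set_sizes)

definition size_class :: "real list \<Rightarrow> nat \<Rightarrow> nat" where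
  "size_class ds i = (THE c. c < m_of ds \<and> sizes ds ! c = ds ! i)"

lemma size_class_unique:
  "i < length ds \<Longrightarrow> \<exists>!c. c < m_of ds \<and> sizes ds ! c = ds ! i"
  unfolding m_of_def by (intro distinct_Ex1) auto

lemma size_class:
  assumes "i < length ds"
  shows "size_class ds i < m_of ds" "sizes ds ! size_class ds i = ds ! i"
  using theI'[OF size_class_unique[OF assms]] unfolding size_class_def by auto

lemma size_class_eq_iff:
  assumes "i < length ds" "c < m_of ds"
  shows "size_class ds i = c \<longleftrightarrow> ds ! i = sizes ds ! c"
  using size_class[OF assms(1)] size_class_unique[OF assms(1)] assms(2) by metis

lemma card_size_class:
  assumes "c < m_of ds"
  shows "card {i. i < length ds \<and> size_class ds i = c} = mult ds c"
proof -
  have "{i. i < length ds \<and> size_class ds i = c} = {i. i < length ds \<and> ds ! i = sizes ds ! c}"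
    using size_class_eq_iff[OF _ assms] by blast
  then show ?thesis
    unfolding mult_def count_mset count_list_eq_length_filter length_filter_conv_card
    by (simp add: eq_commute)
qed

lemma sum_nth_by_size_class:
  assumes "finite P" "\<forall>p\<in>P. g p < length ds"
  shows "(\<Sum>p\<in>P. ds ! g p)
       = (\<Sum>c<m_of ds. real (card {p\<in>P. size_class ds (g p) = c}) * sizes ds ! c)"
proof -
  have "(\<Sum>p\<in>P. ds ! g p) = (\<Sum>c<m_of ds. \<Sum>p\<in>{p\<in>P. size_class ds (g p) = c}. ds ! g p)"
    using assms size_class(1) by (intro sum.group[symmetric]) auto
  also have "\<dots> = (\<Sum>c<m_of ds. \<Sum>p\<in>{p\<in>P. size_class ds (g p) = c}. sizes ds ! c)"
    using assms(2) size_class(2) by (intro sum.cong refl) auto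
  finally show ?thesis by simp
qed

lemma sum_list_by_size_class: "sum_list ds = (\<Sum>c<m_of ds. real (mult ds c) * sizes ds ! c)"
proof -
  have "sum_list ds = (\<Sum>i<length ds. ds ! id i)"
    by (simp add: sum_list_sum_nth atLeast0LessThan)
  then show ?thesis
    using sum_nth_by_size_class[of "{..<length ds}" id ds] by (simp add: card_size_class)
qed

section \<open>Configurations and the LP\<close>

lemma finite_configs: "finite (configs S ds)"
proof (rule finite_subset)
  let ?M = "Max (mult ds ` {..<m_of ds})"
  show "configs S ds \<subseteq> {a. \<forall>c. (c \<in> {..<m_of ds} \<longrightarrow> a c \<in> {..?M}) \<and> (c \<notin> {..<m_of ds} \<longrightarrow> a c = 0)}"
  proof (intro subsetI CollectI allI conjI impI)
    fix a c assume "a \<in> configs S ds"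
    then have "\<forall>c<m_of ds. a c \<le> mult ds c" "\<forall>c\<ge>m_of ds. a c = 0"
      unfolding configs_def by auto
    moreover have "c < m_of ds \<Longrightarrow> mult ds c \<le> ?M" by simp
    ultimately show "c \<in> {..<m_of ds} \<Longrightarrow> a c \<in> {..?M}" "c \<notin> {..<m_of ds} \<Longrightarrow> a c = 0"
      by (auto intro: le_trans)
  qed
qed (intro finite_set_of_finite_funs; simp)

definition config_size :: "real list \<Rightarrow> (nat \<Rightarrow> nat) \<Rightarrow> real" where
  "config_size ds a = (\<Sum>c<m_of ds. real (a c) * sizes ds ! c)"

lemma config_size_le: "a \<in> configs S ds \<Longrightarrow> config_size ds a \<le> S"
  unfolding configs_def config_size_def by simp

lemma config_size_nonneg: "\<forall>d\<in>set ds. 0 \<le> d \<Longrightarrow> 0 \<le> config_size ds a"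
  unfolding config_size_def using sizes_nth_in_set by (intro sum_nonneg) simp

lemma config_size_add: "config_size ds (\<lambda>c. a c + b c) = config_size ds a + config_size ds b"
  unfolding config_size_def by (simp add: sum.distrib algebra_simps)

lemma config_size_cong: "(\<And>c. c < m_of ds \<Longrightarrow> a c = b c) \<Longrightarrow> config_size ds a = config_size ds b"
  unfolding config_size_def by simp

lemma sum_list_config_size: "(\<Sum>b\<leftarrow>L. config_size ds b) = config_size ds (\<lambda>c. \<Sum>b\<leftarrow>L. b c)"
  by (induction L) (simp_all add: config_size_def sum.distrib algebra_simps)

lemma sum_config_size:
  "(\<Sum>a\<in>A. w a * config_size ds a) = (\<Sum>c<m_of ds. (\<Sum>a\<in>A. w a * real (a c)) * sizes ds ! c)"
  unfolding config_size_def
  by (simp add: sum_distrib_left sum_distrib_right mult_ac sum.swap[of _ A])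

definition lp_value :: "real \<Rightarrow> real list \<Rightarrow> ((nat \<Rightarrow> nat) \<Rightarrow> real) \<Rightarrow> real" where
  "lp_value S ds x = (\<Sum>a\<in>configs S ds. x a)"

lemma total_size_le_lp_value:
  assumes "lp_feasible S ds k x"
  shows "total_size ds k \<le> S * lp_value S ds x"
proof -
  have "total_size ds k = (\<Sum>c<m_of ds. (\<Sum>a\<in>configs S ds. x a * real (a c)) * sizes ds ! c)"
    using assms unfolding total_size_def sum_list_by_size_class lp_feasible_def
    by (simp add: sum_distrib_left mult_ac)
  also have "\<dots> = (\<Sum>a\<in>configs S ds. x a * config_size ds a)"
    by (rule sum_config_size[symmetric])
  also have "\<dots> \<le> (\<Sum>a\<in>configs S ds. x a * S)"
    using assms config_size_le unfolding lp_feasible_def by (intro sum_mono mult_left_mono) auto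
  finally show ?thesis
    unfolding lp_value_def by (simp add: sum_distrib_left mult.commute)
qed

section \<open>From packings to LP solutions\<close>

definition bin_config :: "real list \<Rightarrow> nat \<Rightarrow> (nat \<Rightarrow> nat \<Rightarrow> nat) \<Rightarrow> nat \<Rightarrow> nat \<Rightarrow> nat" where
  "bin_config ds k f \<beta> c = (if c < m_of ds
     then card {(i, j). i < length ds \<and> j < k \<and> f i j = \<beta> \<and> size_class ds i = c} else 0)"

lemma bin_config_in_configs:
  assumes "is_k_packing S ds k N f" "\<beta> < N"
  shows "bin_config ds k f \<beta> \<in> configs S ds"
proof -
  define B where "B = {(i, j). i < length ds \<and> j < k \<and> f i j = \<beta>}"
  have fin: "finite B"
    by (rule finite_subset[of _ "{..<length ds} \<times> {..<k}"]) (auto simp: B_def)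
  have eq: "bin_config ds k f \<beta> c = card {p\<in>B. size_class ds (fst p) = c}" if "c < m_of ds" for c
  proof -
    have "{(i, j). i < length ds \<and> j < k \<and> f i j = \<beta> \<and> size_class ds i = c}
        = {p\<in>B. size_class ds (fst p) = c}"
      unfolding B_def by auto
    then show ?thesis using that unfolding bin_config_def by simp
  qed
  have "bin_config ds k f \<beta> c \<le> mult ds c" if c: "c < m_of ds" for c
  proof -
    \<comment> \<open>The copies of one item lie in distinct bins, so a bin holds at most one copy of each item.\<close>
    have "inj_on fst {p\<in>B. size_class ds (fst p) = c}"
    proof (rule inj_onI)
      fix p q assume "p \<in> {p\<in>B. size_class ds (fst p) = c}" "q \<in> {p\<in>B. size_class ds (fst p) = c}"
        and "fst p = fst q"
      then show "p = q"
        using assms(1) unfolding is_k_packing_def B_def by (cases p, cases q) (clarsimp, metis)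
    qed
    moreover have "fst ` {p\<in>B. size_class ds (fst p) = c} \<subseteq> {i. i < length ds \<and> size_class ds i = c}"
      unfolding B_def by auto
    ultimately have "card {p\<in>B. size_class ds (fst p) = c} \<le> card {i. i < length ds \<and> size_class ds i = c}"
      by (intro card_inj_on_le) auto
    then show ?thesis using eq c card_size_class by simp
  qed
  moreover have "config_size ds (bin_config ds k f \<beta>) = (\<Sum>p\<in>B. ds ! fst p)"
    unfolding config_size_def using fin by (simp add: sum_nth_by_size_class B_def eq)
  moreover have "(\<Sum>p\<in>B. ds ! fst p) \<le> S"
    using assms unfolding is_k_packing_def B_def by simp
  ultimately show ?thesis
    unfolding configs_def config_size_def by (simp add: bin_config_def)
qed

lemma sum_bin_config:
  assumes "is_k_packing S ds k N f" "c < m_of ds"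
  shows "(\<Sum>\<beta><N. bin_config ds k f \<beta> c) = k * mult ds c"
proof -
  define C where "C = {i. i < length ds \<and> size_class ds i = c} \<times> {..<k}"
  have "(\<Sum>\<beta><N. bin_config ds k f \<beta> c) = (\<Sum>\<beta><N. \<Sum>p\<in>{p\<in>C. case_prod f p = \<beta>}. 1)"
    using assms(2) unfolding bin_config_def C_def by (intro sum.cong refl) (auto intro: arg_cong[where f = card])
  also have "\<dots> = card C"
  proof -
    have "case_prod f ` C \<subseteq> {..<N}"
      using assms(1) unfolding is_k_packing_def C_def by auto
    then show ?thesis
      using sum.group[of C "{..<N}" "case_prod f" "\<lambda>_. 1 :: nat"] by (simp add: C_def)
  qed
  finally show ?thesis
    unfolding C_def using card_size_class[OF assms(2)] by simp
qed

lemma sum_card_preimage: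
  assumes "finite C" "g ` B \<subseteq> C" "finite B"
  shows "(\<Sum>a\<in>C. real (card {\<beta>\<in>B. g \<beta> = a}) * h a) = (\<Sum>\<beta>\<in>B. h (g \<beta>))"
proof -
  have "(\<Sum>a\<in>C. real (card {\<beta>\<in>B. g \<beta> = a}) * h a) = (\<Sum>a\<in>C. \<Sum>\<beta>\<in>{\<beta>\<in>B. g \<beta> = a}. h (g \<beta>))"
    by (intro sum.cong refl) simp
  also have "\<dots> = (\<Sum>\<beta>\<in>B. h (g \<beta>))"
    using assms by (intro sum.group) auto
  finally show ?thesis .
qed

lemma lp_solution_of_k_packing:
  assumes "is_k_packing S ds k N f"
  shows "\<exists>x. lp_feasible S ds k x \<and> lp_value S ds x = real N"
proof -
  define x where "x a = real (card {\<beta>\<in>{..<N}. bin_config ds k f \<beta> = a})" for a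
  have img: "bin_config ds k f ` {..<N} \<subseteq> configs S ds"
    using bin_config_in_configs[OF assms] by auto
  have "lp_feasible S ds k x"
    unfolding lp_feasible_def x_def
    using sum_card_preimage[OF finite_configs img, of "\<lambda>a. real (a _)"]
      sum_bin_config[OF assms] by (simp add: mult.commute flip: of_nat_sum)
  moreover have "lp_value S ds x = real N"
    unfolding lp_value_def x_def using sum_card_preimage[OF finite_configs img, of "\<lambda>_. 1"] by simp
  ultimately show ?thesis by blast
qed

section \<open>From lists of configurations to packings\<close>

definition bucket :: "nat list \<Rightarrow> nat \<Rightarrow> nat" where
  "bucket cs s = (LEAST \<beta>. s < sum_list (take (Suc \<beta>) cs))"

lemma sum_list_take_mono:
  fixes cs :: "nat list"
  assumes "\<beta> \<le> \<beta>'"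
  shows "sum_list (take \<beta> cs) \<le> sum_list (take \<beta>' cs)"
proof -
  have "take \<beta>' cs = take \<beta> cs @ take (\<beta>' - \<beta>) (drop \<beta> cs)"
    using take_add[of \<beta> "\<beta>' - \<beta>" cs] assms by simp
  then show ?thesis by simp
qed

lemma bucket:
  fixes cs :: "nat list"
  assumes "s < sum_list cs"
  shows "bucket cs s < length cs"
    and "sum_list (take (bucket cs s) cs) \<le> s"
    and "s < sum_list (take (bucket cs s) cs) + cs ! bucket cs s"
proof -
  let ?P = "\<lambda>\<beta>. s < sum_list (take (Suc \<beta>) cs)"
  have P: "?P (bucket cs s)"
    unfolding bucket_def by (rule LeastI[of ?P "length cs"]) (use assms in simp)
  show below: "sum_list (take (bucket cs s) cs) \<le> s"
  proof (cases "bucket cs s")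
    case (Suc \<beta>)
    then have "\<not> ?P \<beta>" using not_less_Least[of \<beta> ?P] unfolding bucket_def by simp
    then show ?thesis using Suc by simp
  qed simp
  show less: "bucket cs s < length cs"
  proof (rule ccontr)
    assume "\<not> bucket cs s < length cs"
    then have "sum_list cs \<le> sum_list (take (bucket cs s) cs)"
      using sum_list_take_mono[of "length cs" "bucket cs s" cs] by simp
    then show False using assms below by simp
  qed
  show "s < sum_list (take (bucket cs s) cs) + cs ! bucket cs s"
    using P less by (simp add: take_Suc_conv_app_nth)
qed

definition rank :: "real list \<Rightarrow> nat \<Rightarrow> nat" where
  "rank ds i = card {i'. i' < i \<and> ds ! i' = ds ! i}"

lemma rank_less_mult:
  assumes "i < length ds"
  shows "rank ds i < mult ds (size_class ds i)"
proof -
  let ?c = "size_class ds i"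
  have "{i'. i' < i \<and> ds ! i' = ds ! i} \<subseteq> {i'. i' < length ds \<and> size_class ds i' = ?c}"
    using assms size_class[OF assms] size_class_eq_iff[of _ ds ?c] by auto
  moreover have "i \<in> {i'. i' < length ds \<and> size_class ds i' = ?c} - {i'. i' < i \<and> ds ! i' = ds ! i}"
    using assms by simp
  ultimately have "card {i'. i' < i \<and> ds ! i' = ds ! i} < card {i'. i' < length ds \<and> size_class ds i' = ?c}"
    by (intro psubset_card_mono) auto
  then show ?thesis
    unfolding rank_def using card_size_class[OF size_class(1)[OF assms]] by simp
qed

lemma rank_strict_mono: "i < i' \<Longrightarrow> ds ! i = ds ! i' \<Longrightarrow> rank ds i < rank ds i'"
  unfolding rank_def by (rule psubset_card_mono) auto

lemma rank_inj: "ds ! i = ds ! i' \<Longrightarrow> rank ds i = rank ds i' \<Longrightarrow> i = i'"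
  using rank_strict_mono[of i i' ds] rank_strict_mono[of i' i ds] by (cases i i' rule: linorder_cases) auto

text \<open>Bin \<open>\<beta>\<close> of a configuration list receives a window of consecutive slots of
  each class of length at most \<open>n\<close>, whereas two copies of one item are \<open>n\<close> or more slots apart.\<close>
definition slot :: "real list \<Rightarrow> nat \<Rightarrow> nat \<Rightarrow> nat" where
  "slot ds i j = j * mult ds (size_class ds i) + rank ds i"

lemma slot_inj:
  assumes "i < length ds" "i' < length ds" "size_class ds i = size_class ds i'"
    and "slot ds i j = slot ds i' j'"
  shows "i = i' \<and> j = j'"
proof -
  let ?n = "mult ds (size_class ds i)"
  have r: "rank ds i < ?n" and r': "rank ds i' < ?n"
    using rank_less_mult[OF assms(1)] rank_less_mult[OF assms(2)] assms(3) by simp_all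
  have eq: "j * ?n + rank ds i = j' * ?n + rank ds i'"
    using assms(3,4) unfolding slot_def by simp
  have "j = j'"
    using arg_cong[OF eq, of "\<lambda>s. s div ?n"] r r' by simp
  moreover have "rank ds i = rank ds i'"
    using arg_cong[OF eq, of "\<lambda>s. s mod ?n"] r r' by simp
  moreover have "ds ! i = ds ! i'"
    using assms(1-3) size_class(2) by metis
  ultimately show ?thesis using rank_inj by blast
qed

lemma slot_less: "i < length ds \<Longrightarrow> j < k \<Longrightarrow> slot ds i j < k * mult ds (size_class ds i)"
proof -
  assume "i < length ds" "j < k"
  then have "slot ds i j < Suc j * mult ds (size_class ds i)"
    unfolding slot_def using rank_less_mult by simp
  also have "\<dots> \<le> k * mult ds (size_class ds i)"
    using \<open>j < k\<close> by (intro mult_right_mono) auto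
  finally show ?thesis .
qed

lemma slot_gap:
  assumes "j < j'"
  shows "slot ds i j + mult ds (size_class ds i) \<le> slot ds i j'"
proof -
  have "Suc j * mult ds (size_class ds i) \<le> j' * mult ds (size_class ds i)"
    using assms by (intro mult_le_mono1) simp
  then show ?thesis unfolding slot_def by simp
qed

definition packing_of_configs :: "real list \<Rightarrow> (nat \<Rightarrow> nat) list \<Rightarrow> nat \<Rightarrow> nat \<Rightarrow> nat" where
  "packing_of_configs ds bs i j = bucket (map (\<lambda>b. b (size_class ds i)) bs) (slot ds i j)"

context
  fixes S :: real and ds :: "real list" and k :: nat and bs :: "(nat \<Rightarrow> nat) list"
  assumes configs: "set bs \<subseteq> configs S ds"
    and covers: "\<forall>c<m_of ds. k * mult ds c \<le> (\<Sum>b\<leftarrow>bs. b c)"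
begin

lemma packing_of_configs_slot:
  assumes "i < length ds" "j < k"
  defines "\<beta> \<equiv> packing_of_configs ds bs i j" and "c \<equiv> size_class ds i"
  shows "\<beta> < length bs"
    and "(\<Sum>b\<leftarrow>take \<beta> bs. b c) \<le> slot ds i j"
    and "slot ds i j < (\<Sum>b\<leftarrow>take \<beta> bs. b c) + (bs ! \<beta>) c"
proof -
  have "slot ds i j < (\<Sum>b\<leftarrow>bs. b c)"
    using slot_less[OF assms(1,2)] covers size_class(1)[OF assms(1)] unfolding c_def
    by (meson less_le_trans)
  moreover have "\<beta> = bucket (map (\<lambda>b. b c) bs) (slot ds i j)"
    unfolding \<beta>_def c_def packing_of_configs_def ..
  ultimately show "\<beta> < length bs"
    and "(\<Sum>b\<leftarrow>take \<beta> bs. b c) \<le> slot ds i j"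
    and "slot ds i j < (\<Sum>b\<leftarrow>take \<beta> bs. b c) + (bs ! \<beta>) c"
    using bucket[of "slot ds i j" "map (\<lambda>b. b c) bs"] by (simp_all add: take_map)
qed

lemma packing_of_configs_distinct:
  assumes "i < length ds" "j < k" "j' < k" "j < j'"
  shows "packing_of_configs ds bs i j \<noteq> packing_of_configs ds bs i j'"
proof
  let ?c = "size_class ds i"
  assume same: "packing_of_configs ds bs i j = packing_of_configs ds bs i j'"
  define \<beta> where "\<beta> = packing_of_configs ds bs i j"
  have "\<beta> < length bs" using packing_of_configs_slot(1)[OF assms(1,2)] by (simp add: \<beta>_def)
  then have "(bs ! \<beta>) ?c \<le> mult ds ?c"
    using configs size_class(1)[OF assms(1)] unfolding configs_def by (auto dest: nth_mem)
  moreover have "(\<Sum>b\<leftarrow>take \<beta> bs. b ?c) \<le> slot ds i j"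
    using packing_of_configs_slot(2)[OF assms(1,2)] by (simp add: \<beta>_def)
  moreover have "slot ds i j' < (\<Sum>b\<leftarrow>take \<beta> bs. b ?c) + (bs ! \<beta>) ?c"
    using packing_of_configs_slot(3)[OF assms(1,3)] same by (simp add: \<beta>_def)
  ultimately show False
    using slot_gap[OF assms(4), of ds i] by linarith
qed

lemma packing_of_configs_load:
  assumes nonneg: "\<forall>d\<in>set ds. 0 \<le> d" and "\<beta> < length bs"
  shows "(\<Sum>p\<in>{(i, j). i < length ds \<and> j < k \<and> packing_of_configs ds bs i j = \<beta>}. ds ! fst p) \<le> S"
proof -
  define B where "B = {(i, j). i < length ds \<and> j < k \<and> packing_of_configs ds bs i j = \<beta>}"
  have fin: "finite B"
    by (rule finite_subset[of _ "{..<length ds} \<times> {..<k}"]) (auto simp: B_def)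
  have count: "card {p\<in>B. size_class ds (fst p) = c} \<le> (bs ! \<beta>) c" for c
  proof -
    let ?Bc = "{p\<in>B. size_class ds (fst p) = c}"
    let ?start = "\<Sum>b\<leftarrow>take \<beta> bs. b c"
    have "inj_on (case_prod (slot ds)) ?Bc"
    proof (rule inj_onI)
      fix p q assume "p \<in> ?Bc" "q \<in> ?Bc" "case_prod (slot ds) p = case_prod (slot ds) q"
      then show "p = q"
        using slot_inj[of "fst p" ds "fst q" "snd p" "snd q"] unfolding B_def
        by (cases p, cases q) simp
    qed
    moreover have "slot ds i j \<in> {?start..<?start + (bs ! \<beta>) c}" if "(i, j) \<in> ?Bc" for i j
      using that packing_of_configs_slot(2,3)[of i j] unfolding B_def by auto
    then have "case_prod (slot ds) ` ?Bc \<subseteq> {?start..<?start + (bs ! \<beta>) c}"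
      by auto
    ultimately show ?thesis
      using card_inj_on_le[of _ ?Bc "{?start..<?start + (bs ! \<beta>) c}"] by simp
  qed
  have "(\<Sum>p\<in>B. ds ! fst p) = (\<Sum>c<m_of ds. real (card {p\<in>B. size_class ds (fst p) = c}) * sizes ds ! c)"
    by (rule sum_nth_by_size_class[OF fin]) (simp add: B_def split_beta)
  also have "\<dots> \<le> config_size ds (bs ! \<beta>)"
    unfolding config_size_def
  proof (rule sum_mono)
    fix c assume "c \<in> {..<m_of ds}"
    then have "0 \<le> sizes ds ! c" using nonneg sizes_nth_in_set by simp
    then show "real (card {p\<in>B. size_class ds (fst p) = c}) * sizes ds ! c \<le> real ((bs ! \<beta>) c) * sizes ds ! c"
      using count[of c] by (simp add: mult_right_mono)
  qed
  also have "\<dots> \<le> S"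
    using configs assms(2) by (intro config_size_le) (simp add: subset_iff)
  finally show ?thesis unfolding B_def .
qed

lemma is_k_packing_of_configs:
  assumes "\<forall>d\<in>set ds. 0 \<le> d"
  shows "is_k_packing S ds k (length bs) (packing_of_configs ds bs)"
  unfolding is_k_packing_def
proof (intro conjI allI impI)
  fix i j j' assume "i < length ds" "j < k" "j' < k" "j \<noteq> j'"
  then show "packing_of_configs ds bs i j \<noteq> packing_of_configs ds bs i j'"
    using packing_of_configs_distinct[of i j j'] packing_of_configs_distinct[of i j' j]
    by (cases j j' rule: linorder_cases) auto
qed (use packing_of_configs_slot(1) packing_of_configs_load[OF assms] in auto)

end

section \<open>Next fit\<close>

text \<open>Next fit adds items one at a time to the last bin and opens a new bin when an item does
  not fit, so any two consecutive bins together hold more than \<open>S\<close>.\<close>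
definition next_fit_invariant :: "real \<Rightarrow> real list \<Rightarrow> (nat \<Rightarrow> nat) list \<Rightarrow> bool" where
  "next_fit_invariant S ds L \<longleftrightarrow> L \<noteq> [] \<and> (\<forall>b\<in>set L. config_size ds b \<le> S)
     \<and> real (length L - 1) * S \<le> 2 * (\<Sum>b\<leftarrow>butlast L. config_size ds b) + config_size ds (last L)"

lemma next_fit_invariant_add_item:
  assumes inv: "next_fit_invariant S ds L" and sizes_le: "\<forall>d\<in>set ds. 0 \<le> d \<and> d \<le> S"
    and c0: "c0 < m_of ds"
  shows "\<exists>L'. next_fit_invariant S ds L'
    \<and> (\<forall>c. (\<Sum>b\<leftarrow>L'. b c) = (\<Sum>b\<leftarrow>L. b c) + (if c = c0 then 1 else 0))"
proof -
  define e :: "nat \<Rightarrow> nat" where "e c = (if c = c0 then 1 else 0)" for c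
  define B l where "B = butlast L" and "l = last L"
  have L: "L = B @ [l]" "\<forall>b\<in>set L. config_size ds b \<le> S"
      "real (length B) * S \<le> 2 * (\<Sum>b\<leftarrow>B. config_size ds b) + config_size ds l"
    using inv unfolding next_fit_invariant_def B_def l_def by auto
  have "config_size ds e = (\<Sum>c<m_of ds. if c = c0 then sizes ds ! c0 else 0)"
    unfolding config_size_def e_def by (intro sum.cong) auto
  then have size_e: "config_size ds e = sizes ds ! c0"
    using c0 by simp
  have e_bounds: "0 \<le> sizes ds ! c0" "sizes ds ! c0 \<le> S"
    using sizes_le sizes_nth_in_set[OF c0] by auto
  show ?thesis
  proof (cases "config_size ds l + sizes ds ! c0 \<le> S")
    case True
    let ?l' = "\<lambda>c. l c + e c"
    have "next_fit_invariant S ds (B @ [?l'])"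
      using L True e_bounds unfolding next_fit_invariant_def by (simp add: config_size_add size_e)
    moreover have "(\<Sum>b\<leftarrow>B @ [?l']. b c) = (\<Sum>b\<leftarrow>L. b c) + e c" for c
      unfolding L(1) by simp
    ultimately show ?thesis
      unfolding e_def by blast
  next
    case False
    have "next_fit_invariant S ds (L @ [e])"
      using L False e_bounds unfolding next_fit_invariant_def
      by (simp add: size_e butlast_append algebra_simps)
    moreover have "(\<Sum>b\<leftarrow>L @ [e]. b c) = (\<Sum>b\<leftarrow>L. b c) + e c" for c
      by simp
    ultimately show ?thesis
      unfolding e_def by blast
  qed
qed

lemma next_fit:
  assumes S_nonneg: "0 \<le> S" and sizes_le: "\<forall>d\<in>set ds. 0 \<le> d \<and> d \<le> S"
    and support: "\<forall>c\<ge>m_of ds. v c = 0"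
  shows "\<exists>L. next_fit_invariant S ds L \<and> (\<forall>c. (\<Sum>b\<leftarrow>L. b c) = v c)"
  using support
proof (induction "\<Sum>c<m_of ds. v c" arbitrary: v)
  case 0
  then have "v c = 0" for c
    by (cases "c < m_of ds") simp_all
  then show ?case
    using S_nonneg unfolding next_fit_invariant_def
    by (intro exI[of _ "[\<lambda>c. 0]"]) (simp add: config_size_def)
next
  case (Suc N v)
  obtain c0 where c0: "c0 < m_of ds" "0 < v c0"
    using Suc.hyps(2) by (metis lessThan_iff neq0_conv sum.neutral nat.distinct(1))
  define v' where "v' = v(c0 := v c0 - 1)"
  have v: "v c = v' c + (if c = c0 then 1 else 0)" for c
    using c0 unfolding v'_def by simp
  have "N = (\<Sum>c<m_of ds. v' c)"
    using Suc.hyps(2) c0 unfolding v by (simp add: sum.distrib)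
  moreover have "\<forall>c\<ge>m_of ds. v' c = 0"
    using Suc.prems c0 unfolding v'_def by simp
  ultimately obtain L where L: "next_fit_invariant S ds L" "\<forall>c. (\<Sum>b\<leftarrow>L. b c) = v' c"
    using Suc.hyps(1) by blast
  obtain L' where "next_fit_invariant S ds L'"
      "\<forall>c. (\<Sum>b\<leftarrow>L'. b c) = (\<Sum>b\<leftarrow>L. b c) + (if c = c0 then 1 else 0)"
    using next_fit_invariant_add_item[OF L(1) sizes_le c0(1)] by blast
  then show ?case
    using L(2) by (intro exI[of _ L']) (simp add: v)
qed

lemma next_fit_configs:
  assumes S_nonneg: "0 \<le> S" and sizes_le: "\<forall>d\<in>set ds. 0 \<le> d \<and> d \<le> S"
    and v_le: "\<forall>c<m_of ds. v c \<le> mult ds c"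
  shows "\<exists>L. set L \<subseteq> configs S ds \<and> (\<forall>c<m_of ds. (\<Sum>b\<leftarrow>L. b c) = v c)
    \<and> real (length L) * S \<le> 2 * config_size ds v + S"
proof -
  define v0 where "v0 c = (if c < m_of ds then v c else 0)" for c
  obtain L where L: "L \<noteq> []" "\<forall>b\<in>set L. config_size ds b \<le> S" "\<forall>c. (\<Sum>b\<leftarrow>L. b c) = v0 c"
    "real (length L - 1) * S \<le> 2 * (\<Sum>b\<leftarrow>butlast L. config_size ds b) + config_size ds (last L)"
    using next_fit[OF S_nonneg sizes_le, of v0] unfolding v0_def next_fit_invariant_def by auto
  have "b \<in> configs S ds" if b: "b \<in> set L" for b
  proof -
    have b_le: "b c \<le> v0 c" for c
      using member_le_sum_list[of "b c" "map (\<lambda>b. b c) L"] b L(3) by simp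
    have "b c \<le> mult ds c" if c: "c < m_of ds" for c
    proof -
      have "b c \<le> v c" using b_le[of c] c unfolding v0_def by simp
      also have "\<dots> \<le> mult ds c" using v_le c by simp
      finally show ?thesis .
    qed
    moreover have "\<forall>c\<ge>m_of ds. b c = 0"
      using b_le unfolding v0_def by (metis le_zero_eq not_le)
    ultimately show ?thesis
      using L(2) b unfolding configs_def config_size_def by simp
  qed
  then have "set L \<subseteq> configs S ds" ..
  moreover have "\<forall>c<m_of ds. (\<Sum>b\<leftarrow>L. b c) = v c"
    using L(3) unfolding v0_def by simp
  moreover have "real (length L) * S \<le> 2 * config_size ds v + S"
  proof -
    let ?last = "config_size ds (last L)" and ?init = "\<Sum>b\<leftarrow>butlast L. config_size ds b"
    have "(\<Sum>b\<leftarrow>butlast L @ [last L]. config_size ds b) = ?init + ?last"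
      by simp
    then have "?init + ?last = config_size ds v"
      unfolding append_butlast_last_id[OF L(1)] sum_list_config_size
      using L(3) by (metis config_size_cong v0_def)
    moreover have "0 \<le> ?last"
      using sizes_le config_size_nonneg by simp
    moreover have "real (length L) * S = real (length L - 1) * S + S"
      using L(1) by (cases L) (simp_all add: algebra_simps)
    ultimately show ?thesis
      using L(4) by linarith
  qed
  ultimately show ?thesis by blast
qed

lemma residual_cover:
  assumes S_nonneg: "0 \<le> S" and sizes_le: "\<forall>d\<in>set ds. 0 \<le> d \<and> d \<le> S"
    and "\<forall>c<m_of ds. r c \<le> k * mult ds c"
  shows "\<exists>L. set L \<subseteq> configs S ds \<and> (\<forall>c<m_of ds. r c \<le> (\<Sum>b\<leftarrow>L. b c))
    \<and> real (length L) * S \<le> 2 * config_size ds r + real k * S"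
  using assms(3)
proof (induction k arbitrary: r)
  case 0
  then show ?case by (intro exI[of _ "[]"]) (simp add: config_size_def)
next
  case (Suc k)
  \<comment> \<open>split off one layer of at most one copy of each item and pack it by next fit\<close>
  define v w where "v c = min (r c) (mult ds c)" and "w c = r c - v c" for c
  have r: "r c = v c + w c" for c
    unfolding v_def w_def by simp
  have "\<forall>c<m_of ds. w c \<le> k * mult ds c"
    using Suc.prems unfolding v_def w_def by auto
  then obtain L2 where L2: "set L2 \<subseteq> configs S ds" "\<forall>c<m_of ds. w c \<le> (\<Sum>b\<leftarrow>L2. b c)"
      "real (length L2) * S \<le> 2 * config_size ds w + real k * S"
    using Suc.IH by blast
  obtain L1 where L1: "set L1 \<subseteq> configs S ds" "\<forall>c<m_of ds. (\<Sum>b\<leftarrow>L1. b c) = v c"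
      "real (length L1) * S \<le> 2 * config_size ds v + S"
    using next_fit_configs[OF S_nonneg sizes_le, of v] unfolding v_def by auto
  have size_r: "config_size ds r = config_size ds v + config_size ds w"
    unfolding r config_size_add ..
  show ?case
  proof (intro exI[of _ "L1 @ L2"] conjI)
    show "set (L1 @ L2) \<subseteq> configs S ds"
      using L1(1) L2(1) by simp
    show "\<forall>c<m_of ds. r c \<le> (\<Sum>b\<leftarrow>L1 @ L2. b c)"
      using L1(2) L2(2) by (simp add: r)
    show "real (length (L1 @ L2)) * S \<le> 2 * config_size ds r + real (Suc k) * S"
      using L1(3) L2(3) unfolding size_r by (simp add: algebra_simps)
  qed
qed

section \<open>Basic solutions\<close>

interpretation real_fun: vector_space "\<lambda>(t::real) (v::nat \<Rightarrow> real) i. t * v i"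
  by unfold_locales (auto simp: fun_eq_iff algebra_simps)

lemma sum_fun_apply: "finite A \<Longrightarrow> (\<Sum>a\<in>A. f a) x = (\<Sum>a\<in>A. f a x)"
  by (induction A rule: finite_induct) auto

lemma linear_dependence_finite_support:
  fixes v :: "'a \<Rightarrow> nat \<Rightarrow> real"
  assumes "finite A" "inj_on v A" "m < card A" "\<forall>a\<in>A. \<forall>i\<ge>m. v a i = 0"
  shows "\<exists>u. (\<forall>i. (\<Sum>a\<in>A. u a * v a i) = 0) \<and> (\<exists>a\<in>A. u a \<noteq> 0)"
proof -
  define e :: "nat \<Rightarrow> nat \<Rightarrow> real" where "e i j = (if j = i then 1 else 0)" for i j
  have "w \<in> real_fun.span (e ` {..<m})" if "w \<in> v ` A" for w
  proof -
    have w: "w = (\<Sum>i<m. (\<lambda>j. w i * e i j))"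
      using that assms(4) by (auto simp: fun_eq_iff sum_fun_apply e_def if_distrib[of "(*) _"] not_less cong: if_cong)
    have "(\<lambda>j. w i * e i j) \<in> real_fun.span (e ` {..<m})" if "i < m" for i
      using that by (intro real_fun.span_scale[OF real_fun.span_base]) simp
    then have "(\<Sum>i<m. (\<lambda>j. w i * e i j)) \<in> real_fun.span (e ` {..<m})"
      by (intro real_fun.span_sum) simp
    then show ?thesis
      using w by simp
  qed
  moreover have "card (e ` {..<m}) < card (v ` A)"
    using card_image_le[of "{..<m}" e] assms(2,3) by (simp add: card_image)
  ultimately have "real_fun.dependent (v ` A)"
    using real_fun.independent_span_bound[of "e ` {..<m}" "v ` A"] by fastforce
  then obtain u where u: "(\<Sum>w\<in>v ` A. (\<lambda>i. u w * w i)) = 0" "\<exists>w\<in>v ` A. u w \<noteq> 0"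
    using assms(1) by (auto simp: real_fun.dependent_finite)
  have "(\<Sum>a\<in>A. u (v a) * v a i) = 0" for i
    using fun_cong[OF u(1), of i] assms(1,2) by (simp add: sum_fun_apply sum.reindex)
  then show ?thesis
    using u(2) by (intro exI[of _ "u \<circ> v"]) auto
qed

lemma exists_sign_nonpos_sum:
  fixes u :: "'a \<Rightarrow> real"
  assumes "finite A" "\<exists>a\<in>A. u a \<noteq> 0"
  shows "\<exists>\<sigma>. (\<sigma> = 1 \<or> \<sigma> = -1) \<and> \<sigma> * sum u A \<le> 0 \<and> (\<exists>a\<in>A. \<sigma> * u a < 0)"
proof (cases "sum u A \<le> 0")
  case True
  have "\<exists>a\<in>A. u a < 0"
  proof (rule ccontr)
    assume "\<not> (\<exists>a\<in>A. u a < 0)"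
    then have "\<forall>a\<in>A. 0 \<le> u a"
      by (simp add: not_less)
    moreover from this have "sum u A = 0"
      using True by (meson antisym sum_nonneg)
    ultimately show False
      using assms sum_nonneg_eq_0_iff by blast
  qed
  then show ?thesis using True by (intro exI[of _ 1]) simp
next
  case False
  then have "\<exists>a\<in>A. 0 < u a"
    using sum_nonpos[of A u] by (meson not_le)
  then show ?thesis using False by (intro exI[of _ "-1"]) simp
qed

lemma exists_step_to_boundary:
  fixes x d :: "'a \<Rightarrow> real"
  assumes "finite A" "\<forall>a\<in>A. 0 < x a" "\<exists>a\<in>A. d a < 0"
  shows "\<exists>t\<ge>0. (\<forall>a\<in>A. 0 \<le> x a + t * d a) \<and> (\<exists>a\<in>A. x a + t * d a = 0)"
proof -
  define N where "N = {a\<in>A. d a < 0}"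
  have N: "finite N" "N \<noteq> {}"
    using assms(1,3) unfolding N_def by auto
  define t where "t = Min ((\<lambda>a. x a / - d a) ` N)"
  have "t \<in> (\<lambda>a. x a / - d a) ` N"
    unfolding t_def using N by (intro Min_in) auto
  then obtain a0 where a0: "a0 \<in> N" "t = x a0 / - d a0"
    by blast
  have t_le: "t \<le> x a / - d a" if "a \<in> N" for a
    unfolding t_def using N that by simp
  have "0 \<le> t"
    using a0 assms(2) unfolding N_def by (simp add: divide_pos_neg less_imp_le)
  moreover have "0 \<le> x a + t * d a" if "a \<in> A" for a
  proof (cases "d a < 0")
    case True
    then have "t * - d a \<le> x a / - d a * - d a"
      using t_le[of a] that unfolding N_def by (intro mult_right_mono) auto
    then show ?thesis
      using True by simp
  next
    case False
    then show ?thesis using \<open>0 \<le> t\<close> assms(2) that by (simp add: less_imp_le)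
  qed
  moreover have "x a0 + t * d a0 = 0"
    using a0 unfolding N_def by simp
  ultimately show ?thesis
    using a0(1) unfolding N_def by blast
qed

definition lp_support :: "real \<Rightarrow> real list \<Rightarrow> ((nat \<Rightarrow> nat) \<Rightarrow> real) \<Rightarrow> (nat \<Rightarrow> nat) set" where
  "lp_support S ds x = {a\<in>configs S ds. x a \<noteq> 0}"

lemma lp_feasible_add_direction:
  assumes "lp_feasible S ds k x"
    and "\<forall>c<m_of ds. (\<Sum>a\<in>configs S ds. real (a c) * d a) = 0"
    and "\<forall>a\<in>configs S ds. 0 \<le> x a + t * d a"
  shows "lp_feasible S ds k (\<lambda>a. x a + t * d a)"
  using assms unfolding lp_feasible_def
  by (simp add: distrib_left sum.distrib mult.left_commute flip: sum_distrib_left)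

lemma lp_descent_direction:
  assumes A: "A \<subseteq> configs S ds" and large: "m_of ds < card A"
  shows "\<exists>d. (\<forall>a. a \<notin> A \<longrightarrow> d a = 0) \<and> (\<forall>c. (\<Sum>a\<in>configs S ds. real (a c) * d a) = 0)
    \<and> (\<Sum>a\<in>configs S ds. d a) \<le> 0 \<and> (\<exists>a\<in>A. d a < 0)"
proof -
  have fin: "finite A"
    using A finite_configs by (rule finite_subset)
  have "inj_on (\<lambda>a c. real (a c)) A"
    by (auto simp: inj_on_def fun_eq_iff)
  moreover have "\<forall>a\<in>A. \<forall>c\<ge>m_of ds. real (a c) = 0"
    using A unfolding configs_def by auto
  ultimately obtain u where u: "\<forall>c. (\<Sum>a\<in>A. u a * real (a c)) = 0" "\<exists>a\<in>A. u a \<noteq> 0"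
    using linear_dependence_finite_support[OF fin _ large] by blast
  then obtain \<sigma> :: real where \<sigma>: "\<sigma> * sum u A \<le> 0" "\<exists>a\<in>A. \<sigma> * u a < 0"
    using exists_sign_nonpos_sum[OF fin] by blast
  define d where "d a = (if a \<in> A then \<sigma> * u a else 0)" for a
  have sum_d: "(\<Sum>a\<in>configs S ds. g a * d a) = \<sigma> * (\<Sum>a\<in>A. g a * u a)" for g
  proof -
    have "(\<Sum>a\<in>configs S ds. g a * d a) = (\<Sum>a\<in>A. g a * d a)"
      by (rule sum.mono_neutral_right[OF finite_configs A]) (simp add: d_def)
    then show ?thesis
      by (simp add: d_def sum_distrib_left mult_ac)
  qed
  have "(\<Sum>a\<in>configs S ds. real (a c) * d a) = 0" for c
    using sum_d[of "\<lambda>a. real (a c)"] u(1) by (simp add: mult.commute)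
  moreover have "(\<Sum>a\<in>configs S ds. d a) \<le> 0"
    using sum_d[of "\<lambda>_. 1"] \<sigma>(1) by simp
  moreover have "\<forall>a. a \<notin> A \<longrightarrow> d a = 0" "\<exists>a\<in>A. d a < 0"
    using \<sigma>(2) unfolding d_def by auto
  ultimately show ?thesis
    by blast
qed

lemma lp_support_reduce:
  assumes feasible: "lp_feasible S ds k x" and large: "m_of ds < card (lp_support S ds x)"
  shows "\<exists>x'. lp_feasible S ds k x' \<and> lp_value S ds x' \<le> lp_value S ds x
    \<and> card (lp_support S ds x') < card (lp_support S ds x)"
proof -
  define A where "A = lp_support S ds x"
  have A: "A \<subseteq> configs S ds" "finite A"
    unfolding A_def lp_support_def using finite_configs by auto
  obtain d where d: "\<forall>a. a \<notin> A \<longrightarrow> d a = 0" "\<forall>c. (\<Sum>a\<in>configs S ds. real (a c) * d a) = 0"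
      "(\<Sum>a\<in>configs S ds. d a) \<le> 0" "\<exists>a\<in>A. d a < 0"
    using lp_descent_direction[OF A(1) large[folded A_def]] by blast
  have "\<forall>a\<in>A. 0 < x a"
    using feasible unfolding A_def lp_support_def lp_feasible_def by (auto simp: less_le)
  then obtain t where t: "0 \<le> t" "\<forall>a\<in>A. 0 \<le> x a + t * d a" "\<exists>a\<in>A. x a + t * d a = 0"
    using exists_step_to_boundary[OF A(2) _ d(4)] by blast
  define x' where "x' a = x a + t * d a" for a
  have "\<forall>a\<in>configs S ds. 0 \<le> x a + t * d a"
    using t(2) d(1) feasible unfolding lp_feasible_def by (metis add.right_neutral mult_zero_right)
  then have "lp_feasible S ds k x'"
    unfolding x'_def using lp_feasible_add_direction[OF feasible] d(2) by blast
  moreover have "lp_value S ds x' \<le> lp_value S ds x"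
    using d(3) t(1) unfolding lp_value_def x'_def
    by (simp add: sum.distrib mult_nonneg_nonpos flip: sum_distrib_left)
  moreover have "card (lp_support S ds x') < card A"
  proof -
    obtain a0 where "a0 \<in> A" "x' a0 = 0"
      using t(3) unfolding x'_def by blast
    moreover have "lp_support S ds x' \<subseteq> A"
      using d(1) unfolding lp_support_def x'_def A_def by auto
    ultimately have "lp_support S ds x' \<subseteq> A - {a0}"
      unfolding lp_support_def by auto
    then show ?thesis
      using A(2) \<open>a0 \<in> A\<close> by (meson card_Diff1_less card_mono finite_Diff order_le_less_trans)
  qed
  ultimately show ?thesis
    unfolding A_def by blast
qed

lemma lp_basic_solution:
  assumes "lp_feasible S ds k x"
  shows "\<exists>x'. lp_feasible S ds k x' \<and> lp_value S ds x' \<le> lp_value S ds x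
    \<and> card (lp_support S ds x') \<le> m_of ds"
  using assms
proof (induction "card (lp_support S ds x)" arbitrary: x rule: less_induct)
  case less
  show ?case
  proof (cases "card (lp_support S ds x) \<le> m_of ds")
    case False
    then obtain x1 where x1: "lp_feasible S ds k x1" "lp_value S ds x1 \<le> lp_value S ds x"
        "card (lp_support S ds x1) < card (lp_support S ds x)"
      using lp_support_reduce[OF less.prems] by auto
    then show ?thesis
      using less.hyps[OF x1(3) x1(1)] by (meson order_trans)
  qed (use less.prems in auto)
qed

section \<open>Rounding\<close>

lemma exists_list_with_multiplicities:
  fixes f :: "'a \<Rightarrow> nat"
  assumes "finite C"
  shows "\<exists>L. set L \<subseteq> C \<and> (\<forall>g :: 'a \<Rightarrow> nat. (\<Sum>b\<leftarrow>L. g b) = (\<Sum>a\<in>C. f a * g a))"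
proof -
  obtain cs where cs: "set cs = C" "distinct cs"
    using finite_distinct_list[OF assms] by blast
  define L where "L = concat (map (\<lambda>a. replicate (f a) a) cs)"
  have "(\<Sum>b\<leftarrow>L. g b) = (\<Sum>a\<in>C. f a * g a)" for g :: "'a \<Rightarrow> nat"
  proof -
    have "(\<Sum>b\<leftarrow>L. g b) = (\<Sum>a\<leftarrow>cs. f a * g a)"
      unfolding L_def by (induction cs) (simp_all add: sum_list_replicate)
    then show ?thesis
      using cs by (simp add: sum_list_distinct_conv_sum_set)
  qed
  moreover have "set L \<subseteq> C"
    unfolding L_def using cs(1) by auto
  ultimately show ?thesis
    by blast
qed

lemma fractional_cover_by_support:
  assumes "\<forall>a\<in>configs S ds. fr a \<le> 1"
    and "\<forall>c<m_of ds. real (r c) \<le> (\<Sum>a\<in>configs S ds. fr a * real (a c))"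
  shows "\<exists>L. set L \<subseteq> configs S ds \<and> (\<forall>c<m_of ds. r c \<le> (\<Sum>b\<leftarrow>L. b c))
    \<and> length L = card {a\<in>configs S ds. fr a \<noteq> 0}"
proof -
  let ?C = "configs S ds"
  define f where "f a = (if fr a \<noteq> 0 then 1 else 0 :: nat)" for a
  obtain L where L: "set L \<subseteq> ?C" "\<forall>g :: _ \<Rightarrow> nat. (\<Sum>b\<leftarrow>L. g b) = (\<Sum>a\<in>?C. f a * g a)"
    using exists_list_with_multiplicities[OF finite_configs] by blast
  have "r c \<le> (\<Sum>b\<leftarrow>L. b c)" if "c < m_of ds" for c
  proof -
    have "real (r c) \<le> (\<Sum>a\<in>?C. fr a * real (a c))"
      using assms(2) that by simp
    also have "\<dots> \<le> (\<Sum>a\<in>?C. real (f a * a c))"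
    proof (rule sum_mono)
      fix a assume "a \<in> ?C"
      then have "fr a * real (a c) \<le> 1 * real (a c)"
        using assms(1) by (intro mult_right_mono) auto
      then show "fr a * real (a c) \<le> real (f a * a c)"
        unfolding f_def by auto
    qed
    also have "\<dots> = real (\<Sum>b\<leftarrow>L. b c)"
      using L(2) by simp
    finally show ?thesis by linarith
  qed
  moreover have "length L = card {a\<in>?C. fr a \<noteq> 0}"
    using L(2)[rule_format, of "\<lambda>_. 1"] finite_configs unfolding f_def
    by (simp add: sum_list_triv sum.If_cases Int_def)
  ultimately show ?thesis
    using L(1) by blast
qed

lemma fractional_cover_by_next_fit:
  assumes S_pos: "0 < S" and sizes_le: "\<forall>d\<in>set ds. 0 \<le> d \<and> d \<le> S"
    and fr_nonneg: "\<forall>a\<in>configs S ds. 0 \<le> fr a"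
    and r_eq: "\<forall>c<m_of ds. real (r c) = (\<Sum>a\<in>configs S ds. fr a * real (a c))"
    and r_le: "\<forall>c<m_of ds. r c \<le> k * mult ds c"
  shows "\<exists>L. set L \<subseteq> configs S ds \<and> (\<forall>c<m_of ds. r c \<le> (\<Sum>b\<leftarrow>L. b c))
    \<and> real (length L) \<le> 2 * (\<Sum>a\<in>configs S ds. fr a) + real k"
proof -
  obtain L where L: "set L \<subseteq> configs S ds" "\<forall>c<m_of ds. r c \<le> (\<Sum>b\<leftarrow>L. b c)"
      "real (length L) * S \<le> 2 * config_size ds r + real k * S"
    using residual_cover[OF less_imp_le[OF S_pos] sizes_le r_le] by blast
  have "config_size ds r = (\<Sum>a\<in>configs S ds. fr a * config_size ds a)"
    unfolding sum_config_size using r_eq by (simp add: config_size_def)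
  also have "\<dots> \<le> (\<Sum>a\<in>configs S ds. fr a * S)"
    using fr_nonneg config_size_le by (intro sum_mono mult_left_mono) auto
  also have "\<dots> = (\<Sum>a\<in>configs S ds. fr a) * S"
    by (simp add: sum_distrib_right)
  finally have "real (length L) * S \<le> (2 * (\<Sum>a\<in>configs S ds. fr a) + real k) * S"
    using L(3) by (simp add: algebra_simps)
  then show ?thesis
    using L(1,2) S_pos by auto
qed

lemma lp_round_down:
  assumes feasible: "lp_feasible S ds k x"
  shows "\<exists>L r. set L \<subseteq> configs S ds
    \<and> lp_value S ds x = real (length L) + (\<Sum>a\<in>configs S ds. frac (x a))
    \<and> (\<forall>c<m_of ds. k * mult ds c = (\<Sum>b\<leftarrow>L. b c) + r c
          \<and> real (r c) = (\<Sum>a\<in>configs S ds. frac (x a) * real (a c)))"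
proof -
  let ?C = "configs S ds"
  define fl where "fl a = nat \<lfloor>x a\<rfloor>" for a
  have fl: "real (fl a) = x a - frac (x a)" if "a \<in> ?C" for a
    using feasible that unfolding lp_feasible_def fl_def frac_def by simp
  obtain L where L: "set L \<subseteq> ?C" "\<forall>g :: _ \<Rightarrow> nat. (\<Sum>b\<leftarrow>L. g b) = (\<Sum>a\<in>?C. fl a * g a)"
    using exists_list_with_multiplicities[OF finite_configs] by blast
  have "lp_value S ds x = (\<Sum>a\<in>?C. real (fl a) + frac (x a))"
    unfolding lp_value_def using fl by (intro sum.cong) auto
  then have "lp_value S ds x = real (length L) + (\<Sum>a\<in>?C. frac (x a))"
    using L(2)[rule_format, of "\<lambda>_. 1"] by (simp add: sum_list_triv sum.distrib)
  moreover have "k * mult ds c = (\<Sum>b\<leftarrow>L. b c) + (k * mult ds c - (\<Sum>b\<leftarrow>L. b c))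
      \<and> real (k * mult ds c - (\<Sum>b\<leftarrow>L. b c)) = (\<Sum>a\<in>?C. frac (x a) * real (a c))"
    if "c < m_of ds" for c
  proof -
    have "real (\<Sum>b\<leftarrow>L. b c) = (\<Sum>a\<in>?C. real (fl a * a c))"
      using L(2) by simp
    then have "real (\<Sum>b\<leftarrow>L. b c) + (\<Sum>a\<in>?C. frac (x a) * real (a c))
        = (\<Sum>a\<in>?C. real (fl a * a c) + frac (x a) * real (a c))"
      by (simp add: sum.distrib)
    also have "\<dots> = (\<Sum>a\<in>?C. real (a c) * x a)"
      by (intro sum.cong) (simp_all add: fl algebra_simps)
    also have "\<dots> = real (k * mult ds c)"
      using feasible that unfolding lp_feasible_def by simp
    finally have eq: "real (\<Sum>b\<leftarrow>L. b c) + (\<Sum>a\<in>?C. frac (x a) * real (a c)) = real (k * mult ds c)" .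
    moreover have "0 \<le> (\<Sum>a\<in>?C. frac (x a) * real (a c))"
      by (intro sum_nonneg) simp
    ultimately have "real (\<Sum>b\<leftarrow>L. b c) \<le> real (k * mult ds c)"
      by linarith
    then have "(\<Sum>b\<leftarrow>L. b c) \<le> k * mult ds c"
      by (simp only: of_nat_le_iff)
    then show ?thesis
      using eq by (simp add: of_nat_diff)
  qed
  ultimately show ?thesis
    using L(1) by (intro exI[of _ L] exI[of _ "\<lambda>c. k * mult ds c - (\<Sum>b\<leftarrow>L. b c)"]) blast
qed

lemma lp_rounding_cover:
  assumes S_pos: "0 < S" and sizes_le: "\<forall>d\<in>set ds. 0 \<le> d \<and> d \<le> S"
    and feasible: "lp_feasible S ds k x" and basic: "card (lp_support S ds x) \<le> m_of ds"
  shows "\<exists>bs. set bs \<subseteq> configs S ds \<and> (\<forall>c<m_of ds. k * mult ds c \<le> (\<Sum>b\<leftarrow>bs. b c))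
    \<and> real (length bs) \<le> lp_value S ds x + real (m_of ds + k) / 2"
proof -
  let ?C = "configs S ds" and ?m = "m_of ds"
  define F where "F = (\<Sum>a\<in>?C. frac (x a))"
  obtain L1 r where L1: "set L1 \<subseteq> ?C" "lp_value S ds x = real (length L1) + F"
    and r: "\<forall>c<?m. k * mult ds c = (\<Sum>b\<leftarrow>L1. b c) + r c
      \<and> real (r c) = (\<Sum>a\<in>?C. frac (x a) * real (a c))"
    using lp_round_down[OF feasible] unfolding F_def by blast
  have frac_bounds: "\<forall>a\<in>?C. 0 \<le> frac (x a)" "\<forall>a\<in>?C. frac (x a) \<le> 1"
    using frac_ge_0 frac_lt_1 less_imp_le by blast+
  have r_eq: "\<forall>c<?m. real (r c) = (\<Sum>a\<in>?C. frac (x a) * real (a c))"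
    and r_cover: "\<forall>c<?m. real (r c) \<le> (\<Sum>a\<in>?C. frac (x a) * real (a c))"
    and r_le: "\<forall>c<?m. r c \<le> k * mult ds c"
    using r by simp_all
  obtain La where La: "set La \<subseteq> ?C" "\<forall>c<?m. r c \<le> (\<Sum>b\<leftarrow>La. b c)"
      "length La = card {a\<in>?C. frac (x a) \<noteq> 0}"
    using fractional_cover_by_support[OF frac_bounds(2) r_cover] by blast
  obtain Lb where Lb: "set Lb \<subseteq> ?C" "\<forall>c<?m. r c \<le> (\<Sum>b\<leftarrow>Lb. b c)"
      "real (length Lb) \<le> 2 * F + real k"
    using fractional_cover_by_next_fit[OF S_pos sizes_le frac_bounds(1) r_eq r_le]
    unfolding F_def by blast
  have "card {a\<in>?C. frac (x a) \<noteq> 0} \<le> card (lp_support S ds x)"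
    unfolding lp_support_def using finite_configs by (intro card_mono) auto
  then have "real (length La) \<le> real ?m"
    using La(3) basic by simp
  define L2 where "L2 = (if length La \<le> length Lb then La else Lb)"
  have "real (length L2) \<le> real (length La)" "real (length L2) \<le> real (length Lb)"
    unfolding L2_def by auto
  then have "real (length L2) \<le> F + real (?m + k) / 2"
    using \<open>real (length La) \<le> real ?m\<close> Lb(3) unfolding of_nat_add by (simp add: field_simps)
  moreover have "set L2 \<subseteq> ?C" and L2_covers: "\<forall>c<?m. r c \<le> (\<Sum>b\<leftarrow>L2. b c)"
    using La Lb unfolding L2_def by auto
  moreover have "k * mult ds c \<le> (\<Sum>b\<leftarrow>L1 @ L2. b c)" if "c < ?m" for c
    using L2_covers r that by force
  ultimately show ?thesis
    using L1 by (intro exI[of _ "L1 @ L2"]) auto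
qed

lemma exists_k_packing:
  assumes "0 \<le> S" and "\<forall>d\<in>set ds. 0 \<le> d \<and> d \<le> S"
  shows "\<exists>N f. is_k_packing S ds k N f"
proof -
  obtain bs where "set bs \<subseteq> configs S ds" "\<forall>c<m_of ds. k * mult ds c \<le> (\<Sum>b\<leftarrow>bs. b c)"
    using residual_cover[OF assms, of "\<lambda>c. k * mult ds c" k] by auto
  then show ?thesis
    using is_k_packing_of_configs assms(2) by blast
qed

lemma OPT_packing:
  assumes "0 \<le> S" and "\<forall>d\<in>set ds. 0 \<le> d \<and> d \<le> S"
  shows "\<exists>f. is_k_packing S ds k (OPT S ds k) f"
  unfolding OPT_def using exists_k_packing[OF assms] by (rule LeastI_ex)

lemma OPT_le_lp_value:
  assumes "0 < S" and "\<forall>d\<in>set ds. 0 \<le> d \<and> d \<le> S" and "lp_feasible S ds k x"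
  shows "real (OPT S ds k) \<le> lp_value S ds x + real (m_of ds + k) / 2"
proof -
  obtain x' where x': "lp_feasible S ds k x'" "lp_value S ds x' \<le> lp_value S ds x"
      "card (lp_support S ds x') \<le> m_of ds"
    using lp_basic_solution[OF assms(3)] by blast
  obtain bs where bs: "set bs \<subseteq> configs S ds" "\<forall>c<m_of ds. k * mult ds c \<le> (\<Sum>b\<leftarrow>bs. b c)"
      "real (length bs) \<le> lp_value S ds x' + real (m_of ds + k) / 2"
    using lp_rounding_cover[OF assms(1,2) x'(1,3)] by blast
  have "OPT S ds k \<le> length bs"
    unfolding OPT_def using is_k_packing_of_configs[OF bs(1,2)] assms(2) by (intro Least_le) auto
  then show ?thesis
    using bs(3) x'(2) by linarith
qed

lemma LIN_le_lp_value:
  assumes "lp_feasible S ds k x"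
  shows "LIN S ds k \<le> lp_value S ds x"
  unfolding LIN_def lp_value_def
proof (rule cInf_lower)
  show "(\<Sum>a\<in>configs S ds. x a) \<in> {(\<Sum>a\<in>configs S ds. x a) | x. lp_feasible S ds k x}"
    using assms by blast
  show "bdd_below {(\<Sum>a\<in>configs S ds. x a) | x. lp_feasible S ds k x}"
    by (rule bdd_belowI[of _ 0]) (auto simp: lp_feasible_def intro: sum_nonneg)
qed

lemma le_LIN:
  assumes "lp_feasible S ds k x0" and "\<And>x. lp_feasible S ds k x \<Longrightarrow> z \<le> lp_value S ds x"
  shows "z \<le> LIN S ds k"
  unfolding LIN_def using assms by (intro cInf_greatest) (auto simp: lp_value_def)

lemma total_size_le_LIN:
  assumes "0 < S" and "lp_feasible S ds k x0"
  shows "total_size ds k \<le> S * LIN S ds k"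
proof -
  have "total_size ds k / S \<le> LIN S ds k"
  proof (rule le_LIN[OF assms(2)])
    fix x assume "lp_feasible S ds k x"
    then show "total_size ds k / S \<le> lp_value S ds x"
      using total_size_le_lp_value assms(1) by (simp add: divide_le_eq mult.commute)
  qed
  then show ?thesis
    using assms(1) by (simp add: divide_le_eq mult.commute)
qed

lemma OPT_le_LIN:
  assumes "0 < S" and "\<forall>d\<in>set ds. 0 \<le> d \<and> d \<le> S" and "lp_feasible S ds k x0"
  shows "real (OPT S ds k) \<le> LIN S ds k + real (m_of ds + k) / 2"
proof -
  have "real (OPT S ds k) - real (m_of ds + k) / 2 \<le> LIN S ds k"
  proof (rule le_LIN[OF assms(3)])
    fix x assume "lp_feasible S ds k x"
    then show "real (OPT S ds k) - real (m_of ds + k) / 2 \<le> lp_value S ds x"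
      using OPT_le_lp_value[OF assms(1,2)] by fastforce
  qed
  then show ?thesis by simp
qed

theorem lemma11:
  fixes S :: real and ds :: "real list" and k :: nat
  assumes "S > 0"
    and "\<forall>d\<in>set ds. 0 < d \<and> d \<le> S"
    and "k \<ge> 1"
  shows "total_size ds k \<le> S * LIN S ds k
       \<and> S * LIN S ds k \<le> S * real (OPT S ds k)
       \<and> S * real (OPT S ds k) \<le> S * LIN S ds k + S * real (m_of ds + k) / 2"
proof -
  have S: "0 < S" and sizes: "\<forall>d\<in>set ds. 0 \<le> d \<and> d \<le> S"
    using assms(1,2) by auto
  obtain f where "is_k_packing S ds k (OPT S ds k) f"
    using OPT_packing[OF less_imp_le[OF S] sizes] by blast
  then obtain x0 where x0: "lp_feasible S ds k x0" "lp_value S ds x0 = real (OPT S ds k)"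
    using lp_solution_of_k_packing by blast
  have "LIN S ds k \<le> real (OPT S ds k)"
    using LIN_le_lp_value[OF x0(1)] x0(2) by simp
  with S have "S * LIN S ds k \<le> S * real (OPT S ds k)"
    by simp
  moreover have "S * real (OPT S ds k) \<le> S * (LIN S ds k + real (m_of ds + k) / 2)"
    using OPT_le_LIN[OF S sizes x0(1)] S by simp
  ultimately show ?thesis
    using total_size_le_LIN[OF S x0(1)] by (simp add: distrib_left)
qed

end
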